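(* Let $\varphi$ be a holomorphic self-map of $\mathbb{D}$ and $C_\varphi:H^2(\mathbb{D})\to H^2(\mathbb{D})$ the corresponding composition operator. Then the adjoint $C_\varphi^*$ is a composition operator (i.e. $C_\varphi^*=C_\psi$ for some holomorphic self-map $\psi$ of $\mathbb{D}$) if and only if $\varphi(z)=\delta z$ for some constant $\delta\in\mathbb{C}$ with $|\delta|\le1$.
   Context: $\mathbb{D}$ is the open unit disc; $H^2(\mathbb{D})$ is the Hardy space of holomorphic $f(z)=\sum a_nz^n$ with $\|f\|^2=\sum|a_n|^2<\infty$, a reproducing kernel Hilbert space with kernel $\kappa_w(z)=\frac{1}{1-\overline{w}z}$. $C_\varphi f=f\circ\varphi$. *)

theory Defs
  imports "HOL-Complex_Analysis.Complex_Analysis"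
begin

definition taylor_coeff :: "(complex \<Rightarrow> complex) \<Rightarrow> nat \<Rightarrow> complex" where
  "taylor_coeff f n = (deriv ^^ n) f 0 / of_nat (fact n)"

definition hardy2 :: "(complex \<Rightarrow> complex) set" where
  "hardy2 = {f. f holomorphic_on ball 0 1 \<and> summable (\<lambda>n. (cmod (taylor_coeff f n))^2)}"

definition h2_inner :: "(complex \<Rightarrow> complex) \<Rightarrow> (complex \<Rightarrow> complex) \<Rightarrow> complex" where
  "h2_inner f g = (\<Sum>n. taylor_coeff f n * cnj (taylor_coeff g n))"

definition disc_selfmap :: "(complex \<Rightarrow> complex) \<Rightarrow> bool" where
  "disc_selfmap \<phi> \<longleftrightarrow> \<phi> holomorphic_on ball 0 1 \<and> \<phi> ` ball 0 1 \<subseteq> ball 0 1"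

definition comp_op :: "(complex \<Rightarrow> complex) \<Rightarrow> (complex \<Rightarrow> complex) \<Rightarrow> (complex \<Rightarrow> complex)" where
  "comp_op \<phi> f = f \<circ> \<phi>"

definition h2_adjoint_of :: "((complex \<Rightarrow> complex) \<Rightarrow> (complex \<Rightarrow> complex)) \<Rightarrow> ((complex \<Rightarrow> complex) \<Rightarrow> (complex \<Rightarrow> complex)) \<Rightarrow> bool" where
  "h2_adjoint_of T S \<longleftrightarrow> (\<forall>f\<in>hardy2. \<forall>g\<in>hardy2. h2_inner (S f) g = h2_inner f (T g))"

end

theory Submission
  imports Defs
begin

text \<open>Testing the adjoint relation on the monomials \<open>z\<^sup>j\<close> and \<open>z\<^sup>k\<close> shows that the
  \<open>k\<close>-th Taylor coefficient of \<open>\<phi>\<^sup>j\<close> is the conjugate of the \<open>j\<close>-th Taylor coefficient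
  of \<open>\<psi>\<^sup>k\<close>. The pairs \<open>(j,k) = (1,0), (0,1)\<close> give \<open>\<phi> 0 = \<psi> 0 = 0\<close>; then for \<open>k \<ge> 2\<close>
  the linear coefficient of \<open>\<psi>\<^sup>k\<close> vanishes, so all Taylor coefficients of \<open>\<phi>\<close> beyond
  the first vanish and \<open>\<phi>\<close> is linear. Conversely \<open>C\<^sub>\<phi>\<close> with \<open>\<phi> z = \<delta> z\<close> multiplies the
  \<open>n\<close>-th Taylor coefficient by \<open>\<delta>\<^sup>n\<close>, so its adjoint multiplies it by \<open>(cnj \<delta>)\<^sup>n\<close>.\<close>

lemma taylor_coeff_0 [simp]: "taylor_coeff f 0 = f 0"
  by (simp add: taylor_coeff_def)

lemma taylor_coeff_cong_ev:
  assumes "eventually (\<lambda>z. f z = g z) (nhds 0)"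
  shows "taylor_coeff f n = taylor_coeff g n"
  unfolding taylor_coeff_def using higher_deriv_cong_ev[OF assms refl] by simp

lemma taylor_coeff_power: "taylor_coeff (\<lambda>w. w ^ k) n = (if n = k then 1 else 0)"
proof -
  have deriv_power: "(deriv ^^ n) (\<lambda>w::complex. w ^ k) 0 = pochhammer (of_nat (Suc k - n)) n * 0 ^ (k - n)"
    using higher_deriv_power[of n 0 k 0] by simp
  consider "n = k" | "n < k" | "n > k"
    by linarith
  then show ?thesis
  proof cases
    case 1
    then show ?thesis
      using deriv_power by (simp add: taylor_coeff_def pochhammer_fact[symmetric])
  next
    case 2
    then show ?thesis
      using deriv_power by (simp add: taylor_coeff_def)
  next
    case 3
    then have "Suc k - n = 0"
      by simp
    then show ?thesis
      using 3 deriv_power by (simp add: taylor_coeff_def pochhammer_0_left)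
  qed
qed

lemma power_in_hardy2: "(\<lambda>w. w ^ k) \<in> hardy2"
proof -
  have "(\<lambda>n. (cmod (taylor_coeff (\<lambda>w. w ^ k) n))\<^sup>2) = (\<lambda>n. if n = k then 1 else 0)"
    by (auto simp: taylor_coeff_power)
  moreover have "summable (\<lambda>n::nat. if n = k then (1::real) else 0)"
    using sums_single[of k "\<lambda>_. 1::real"] by (simp add: sums_iff)
  ultimately show ?thesis
    by (simp add: hardy2_def holomorphic_intros)
qed

lemma h2_inner_power_right: "h2_inner f (\<lambda>w. w ^ k) = taylor_coeff f k"
proof -
  have "(\<lambda>n. taylor_coeff f n * cnj (taylor_coeff (\<lambda>w. w ^ k) n)) =
        (\<lambda>n. if n = k then taylor_coeff f n else 0)"
    by (auto simp: taylor_coeff_power)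
  then show ?thesis
    unfolding h2_inner_def using sums_single[of k "taylor_coeff f"] by (simp add: sums_iff)
qed

lemma h2_inner_power_left: "h2_inner (\<lambda>w. w ^ k) g = cnj (taylor_coeff g k)"
proof -
  have "(\<lambda>n. taylor_coeff (\<lambda>w. w ^ k) n * cnj (taylor_coeff g n)) =
        (\<lambda>n. if n = k then cnj (taylor_coeff g n) else 0)"
    by (auto simp: taylor_coeff_power)
  then show ?thesis
    unfolding h2_inner_def using sums_single[of k "\<lambda>n. cnj (taylor_coeff g n)"]
    by (simp add: sums_iff)
qed

lemma taylor_coeff_h2_adjoint:
  assumes "h2_adjoint_of T S"
  shows "taylor_coeff (S (\<lambda>w. w ^ j)) k = cnj (taylor_coeff (T (\<lambda>w. w ^ k)) j)"
proof -
  have "h2_inner (S (\<lambda>w. w ^ j)) (\<lambda>w. w ^ k) = h2_inner (\<lambda>w. w ^ j) (T (\<lambda>w. w ^ k))"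
    using assms power_in_hardy2 unfolding h2_adjoint_of_def by blast
  then show ?thesis
    by (simp only: h2_inner_power_right h2_inner_power_left)
qed

lemma taylor_coeff_comp_op_power:
  assumes "h2_adjoint_of (comp_op \<psi>) (comp_op \<phi>)"
  shows "taylor_coeff (\<lambda>z. \<phi> z ^ j) k = cnj (taylor_coeff (\<lambda>z. \<psi> z ^ k) j)"
  using taylor_coeff_h2_adjoint[OF assms] by (simp add: comp_op_def o_def)

lemma taylor_coeff_1_power_eq_0:
  assumes "g field_differentiable at 0" "g 0 = 0" "k \<ge> 2"
  shows "taylor_coeff (\<lambda>z. g z ^ k) 1 = 0"
proof -
  obtain D where "(g has_field_derivative D) (at 0)"
    using assms(1) by (auto simp: field_differentiable_def)
  then have "((\<lambda>z. g z ^ k) has_field_derivative of_nat k * D * g 0 ^ (k - 1)) (at 0)"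
    using DERIV_power by (simp add: mult_ac)
  then have "deriv (\<lambda>z. g z ^ k) 0 = 0"
    using assms(2,3) by (simp add: DERIV_imp_deriv)
  then show ?thesis
    by (simp add: taylor_coeff_def)
qed

lemma eq_linear_if_taylor_coeffs_vanish:
  assumes f: "f holomorphic_on ball 0 r" and "f 0 = 0"
    and vanish: "\<And>k. k \<ge> 2 \<Longrightarrow> taylor_coeff f k = 0" and z: "z \<in> ball 0 r"
  shows "f z = taylor_coeff f 1 * z"
proof -
  have "(\<lambda>n. taylor_coeff f n * z ^ n) sums f z"
    using holomorphic_power_series[OF f z] by (simp add: taylor_coeff_def)
  moreover have "(\<lambda>n. taylor_coeff f n * z ^ n) sums (\<Sum>n<2. taylor_coeff f n * z ^ n)"
    using vanish by (intro sums_finite) auto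
  ultimately show ?thesis
    using \<open>f 0 = 0\<close> by (simp add: sums_unique2 numeral_2_eq_2)
qed

lemma eq_linear_if_h2_adjoint_comp_op:
  assumes \<phi>: "disc_selfmap \<phi>" and \<psi>: "disc_selfmap \<psi>"
    and adj: "h2_adjoint_of (comp_op \<psi>) (comp_op \<phi>)" and z: "z \<in> ball 0 1"
  shows "\<phi> z = taylor_coeff \<phi> 1 * z"
proof -
  note coeffs = taylor_coeff_comp_op_power[OF adj]
  note taylor_coeff_const = taylor_coeff_power[of 0, simplified]
  have "\<phi> 0 = 0"
    using coeffs[of 1 0] by (simp add: taylor_coeff_const)
  moreover have "\<psi> 0 = 0"
    using coeffs[of 0 1] by (simp add: taylor_coeff_const)
  moreover have "\<psi> field_differentiable at 0"
    using \<psi> by (auto simp: disc_selfmap_def intro: holomorphic_on_imp_differentiable_at)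
  ultimately have "taylor_coeff \<phi> k = 0" if "k \<ge> 2" for k
    using coeffs[of 1 k] taylor_coeff_1_power_eq_0[OF _ _ that] by simp
  then show ?thesis
    using \<phi> \<open>\<phi> 0 = 0\<close> z by (intro eq_linear_if_taylor_coeffs_vanish) (auto simp: disc_selfmap_def)
qed

lemma scaling_image_ball_subset_iff:
  "(\<lambda>z. \<delta> * z) ` ball 0 1 \<subseteq> ball 0 1 \<longleftrightarrow> cmod \<delta> \<le> 1"
proof
  assume sub: "(\<lambda>z. \<delta> * z) ` ball 0 1 \<subseteq> ball 0 1"
  show "cmod \<delta> \<le> 1"
  proof (rule ccontr)
    assume "\<not> cmod \<delta> \<le> 1"
    then have "1 / \<delta> \<in> ball 0 1" and "\<delta> \<noteq> 0"
      by (auto simp: norm_divide divide_less_eq)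
    then have "\<delta> * (1 / \<delta>) \<in> ball 0 1"
      using sub by blast
    with \<open>\<delta> \<noteq> 0\<close> show False
      by simp
  qed
next
  assume "cmod \<delta> \<le> 1"
  then have "cmod \<delta> * cmod z < 1" if "cmod z < 1" for z
    using that mult_left_le_one_le[of "cmod z" "cmod \<delta>"] by simp
  then show "(\<lambda>z. \<delta> * z) ` ball 0 1 \<subseteq> ball 0 1"
    by (auto simp: norm_mult)
qed

lemma disc_selfmap_scaling: "cmod \<delta> \<le> 1 \<Longrightarrow> disc_selfmap (\<lambda>z. \<delta> * z)"
  by (simp add: disc_selfmap_def scaling_image_ball_subset_iff holomorphic_intros)

lemma taylor_coeff_comp_op_scaling:
  assumes f: "f holomorphic_on ball 0 1" and \<delta>: "cmod \<delta> \<le> 1"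
    and \<phi>: "\<forall>z\<in>ball 0 1. \<phi> z = \<delta> * z"
  shows "taylor_coeff (comp_op \<phi> f) n = \<delta> ^ n * taylor_coeff f n"
proof -
  have "eventually (\<lambda>z. comp_op \<phi> f z = f (\<delta> * z)) (nhds 0)"
    using eventually_nhds_in_open[of "ball 0 1" 0] \<phi>
    by (auto simp: comp_op_def elim!: eventually_mono)
  then have "taylor_coeff (comp_op \<phi> f) n = taylor_coeff (\<lambda>z. f (\<delta> * z)) n"
    by (rule taylor_coeff_cong_ev)
  also have "(deriv ^^ n) (\<lambda>z. f (\<delta> * z)) 0 = \<delta> ^ n * (deriv ^^ n) f (\<delta> * 0)"
    using \<delta> scaling_image_ball_subset_iff[of \<delta>]
    by (intro higher_deriv_compose_linear[OF f, where S = "ball 0 1"]) (auto simp: image_subset_iff)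
  then have "taylor_coeff (\<lambda>z. f (\<delta> * z)) n = \<delta> ^ n * taylor_coeff f n"
    by (simp add: taylor_coeff_def)
  finally show ?thesis .
qed

lemma h2_adjoint_of_scaling:
  assumes \<delta>: "cmod \<delta> \<le> 1" and \<phi>: "\<forall>z\<in>ball 0 1. \<phi> z = \<delta> * z"
  shows "h2_adjoint_of (comp_op (\<lambda>z. cnj \<delta> * z)) (comp_op \<phi>)"
  unfolding h2_adjoint_of_def h2_inner_def
proof (intro ballI)
  fix f g assume "f \<in> hardy2" "g \<in> hardy2"
  then have "f holomorphic_on ball 0 1" "g holomorphic_on ball 0 1"
    by (auto simp: hardy2_def)
  then show "(\<Sum>n. taylor_coeff (comp_op \<phi> f) n * cnj (taylor_coeff g n)) =
             (\<Sum>n. taylor_coeff f n * cnj (taylor_coeff (comp_op (\<lambda>z. cnj \<delta> * z) g) n))"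
    using \<delta> \<phi> taylor_coeff_comp_op_scaling[of g "cnj \<delta>" "\<lambda>z. cnj \<delta> * z"]
    by (simp add: taylor_coeff_comp_op_scaling mult_ac)
qed

theorem theorem3p1:
  assumes "disc_selfmap \<phi>"
  shows "(\<exists>\<psi>. disc_selfmap \<psi> \<and> h2_adjoint_of (comp_op \<psi>) (comp_op \<phi>)) \<longleftrightarrow>
         (\<exists>\<delta>::complex. cmod \<delta> \<le> 1 \<and> (\<forall>z\<in>ball 0 1. \<phi> z = \<delta> * z))"
proof
  assume "\<exists>\<psi>. disc_selfmap \<psi> \<and> h2_adjoint_of (comp_op \<psi>) (comp_op \<phi>)"
  then obtain \<psi> where "disc_selfmap \<psi>" "h2_adjoint_of (comp_op \<psi>) (comp_op \<phi>)"
    by blast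
  then have linear: "\<forall>z\<in>ball 0 1. \<phi> z = taylor_coeff \<phi> 1 * z"
    using assms eq_linear_if_h2_adjoint_comp_op by blast
  then have "\<phi> ` ball 0 1 = (\<lambda>z. taylor_coeff \<phi> 1 * z) ` ball 0 1"
    by (intro image_cong) simp_all
  then have "cmod (taylor_coeff \<phi> 1) \<le> 1"
    using assms by (simp add: disc_selfmap_def flip: scaling_image_ball_subset_iff)
  then show "\<exists>\<delta>. cmod \<delta> \<le> 1 \<and> (\<forall>z\<in>ball 0 1. \<phi> z = \<delta> * z)"
    using linear by blast
next
  assume "\<exists>\<delta>. cmod \<delta> \<le> 1 \<and> (\<forall>z\<in>ball 0 1. \<phi> z = \<delta> * z)"
  then obtain \<delta> where "cmod \<delta> \<le> 1" "\<forall>z\<in>ball 0 1. \<phi> z = \<delta> * z"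
    by blast
  then show "\<exists>\<psi>. disc_selfmap \<psi> \<and> h2_adjoint_of (comp_op \<psi>) (comp_op \<phi>)"
    using disc_selfmap_scaling[of "cnj \<delta>"] h2_adjoint_of_scaling by auto
qed

end
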